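(* Consider Algorithm 1 applied to $\min\varphi(w)$ s.t. $w\in D$, assume the inner loop always terminates, and let $\{w^j\}$ be the resulting infinite sequence of outer iterates. Assume that $\varphi$ is bounded from below and uniformly continuous on $\mathcal S_\varphi(w^0):=\{w\in D:\varphi(w)\le\varphi(w^0)\}$. Let $\bar w$ be an accumulation point of $\{w^j\}$, with $w^j\to\bar w$ along a subsequence $K$. Then $\bar w$ is an M-stationary point of the problem, i.e., $0\in\nabla\varphi(\bar w)+\mathcal N^{\lim}_D(\bar w)$, and $\gamma_j(w^{j+1}-w^j)\to0$ as $j\to\infty$, $j\in K$.
   Context: $\mathbb W$ is a Euclidean space, $\varphi\colon\mathbb W\to\mathbb R$ continuously differentiable, $D\subset\mathbb W$ nonempty and closed (neither need be convex). The limiting normal cone at $\bar w\in D$ is $\mathcal N^{\lim}_D(\bar w):=\limsup_{w\to\bar w}\operatorname{cone}(w-\Pi_D(w))$ (outer set limit, $\Pi_D$ the multivalued Euclidean projection onto $D$). Algorithm 1 (general spectral gradient method, without termination test): parameters $\tau>1$, $\sigma\in(0,1)$, $0<\gamma_{\min}\le\gamma_{\max}<\infty$, $m\in\mathbb N$, starting point $w^0\in D$. For $j=0,1,2,\dots$: set $m_j:=\min(j,m)$ and choose $\gamma_j^0\in[\gamma_{\min},\gamma_{\max}]$; for $i=1,2,\dots$ set $\gamma_{j,i}:=\tau^{i-1}\gamma_j^0$ and compute a (global) solution $w^{j,i}$ of $\min_w \varphi(w^j)+\langle\nabla\varphi(w^j),w-w^j\rangle+\frac{\gamma_{j,i}}2\|w-w^j\|^2$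 s.t. $w\in D$ (subproblem $Q(j,i)$); the inner loop stops at the first $i$ with $\varphi(w^{j,i})\le\max_{r=0,\dots,m_j}\varphi(w^{j-r})+\sigma\langle\nabla\varphi(w^j),w^{j,i}-w^j\rangle$; then set $i_j:=i$, $\gamma_j:=\gamma_{j,i_j}$, $w^{j+1}:=w^{j,i_j}$. *)

theory Defs
  imports "HOL-Analysis.Analysis"
begin

definition proj_set :: "'a::euclidean_space set \<Rightarrow> 'a \<Rightarrow> 'a set" where
  "proj_set D w = {p \<in> D. \<forall>d\<in>D. dist w p \<le> dist w d}"

definition ray_cone :: "'a::real_vector set \<Rightarrow> 'a set" where
  "ray_cone S = {t *\<^sub>R s | t s. 0 \<le> t \<and> s \<in> S}"

text \<open>Limiting normal cone: outer (Painleve-Kuratowski) limit of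
  cone(w - Pi_D(w)) as w tends to wbar.\<close>
definition lim_normal_cone :: "'a::euclidean_space set \<Rightarrow> 'a \<Rightarrow> 'a set" where
  "lim_normal_cone D wbar =
     {v. \<exists>ws vs. ws \<longlonglongrightarrow> wbar \<and> vs \<longlonglongrightarrow> v \<and>
          (\<forall>k. vs k \<in> ray_cone ((\<lambda>p. ws k - p) ` proj_set D (ws k)))}"

definition subproblem_sol ::
  "('a::euclidean_space \<Rightarrow> real) \<Rightarrow> ('a \<Rightarrow> 'a) \<Rightarrow> 'a set \<Rightarrow> 'a \<Rightarrow> real \<Rightarrow> 'a \<Rightarrow> bool" where
  "subproblem_sol phi grad D wj gam x \<longleftrightarrow> x \<in> D \<and>
     (\<forall>y\<in>D. phi wj + grad wj \<bullet> (x - wj) + gam / 2 * (norm (x - wj))\<^sup>2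
              \<le> phi wj + grad wj \<bullet> (y - wj) + gam / 2 * (norm (y - wj))\<^sup>2)"

definition accept ::
  "('a::euclidean_space \<Rightarrow> real) \<Rightarrow> ('a \<Rightarrow> 'a) \<Rightarrow> nat \<Rightarrow> real \<Rightarrow> (nat \<Rightarrow> 'a) \<Rightarrow> nat \<Rightarrow> 'a \<Rightarrow> bool" where
  "accept phi grad m sig w j x \<longleftrightarrow>
     phi x \<le> Max ((\<lambda>r. phi (w (j - r))) ` {0..min j m}) + sig * (grad (w j) \<bullet> (x - w j))"

text \<open>Runs of Algorithm 1 (inner loop always terminating): outer iterates w,
  initial trial parameters gam0, inner iterates wi j i (for 1 <= i <= ii j),
  accepted inner index ii j, and accepted parameters gam j.\<close>
definition spg_run ::
  "('a::euclidean_space \<Rightarrow> real) \<Rightarrow> ('a \<Rightarrow> 'a) \<Rightarrow> 'a set \<Rightarrow> real \<Rightarrow> real \<Rightarrow> real \<Rightarrow> real \<Rightarrow> nat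
   \<Rightarrow> (nat \<Rightarrow> 'a) \<Rightarrow> (nat \<Rightarrow> real) \<Rightarrow> (nat \<Rightarrow> nat \<Rightarrow> 'a) \<Rightarrow> (nat \<Rightarrow> nat) \<Rightarrow> (nat \<Rightarrow> real) \<Rightarrow> bool" where
  "spg_run phi grad D tau sig gmin gmax m w gam0 wi ii gam \<longleftrightarrow>
     w 0 \<in> D \<and>
     (\<forall>j. gmin \<le> gam0 j \<and> gam0 j \<le> gmax) \<and>
     (\<forall>j. 1 \<le> ii j) \<and>
     (\<forall>j i. 1 \<le> i \<and> i \<le> ii j \<longrightarrow> subproblem_sol phi grad D (w j) (tau ^ (i - 1) * gam0 j) (wi j i)) \<and>
     (\<forall>j i. 1 \<le> i \<and> i < ii j \<longrightarrow> \<not> accept phi grad m sig w j (wi j i)) \<and>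
     (\<forall>j. accept phi grad m sig w j (wi j (ii j))) \<and>
     (\<forall>j. gam j = tau ^ (ii j - 1) * gam0 j) \<and>
     (\<forall>j. w (Suc j) = wi j (ii j))"

end

theory Submission
  imports Defs
begin

(* By completing the square, the accepted iterate w(j+1) is a Euclidean projection of the
   gradient step w j - grad (w j) / gam j onto D, and the acceptance test gives
   phi (w (j+1)) <= (maximum of the last m+1 values) - sig * gmin / 2 * |w (j+1) - w j|^2.
   Hence these window maxima decrease to a limit; uniform continuity of phi on the level set
   propagates the limit backwards through the window, so the steps tend to zero.
   Along K also gam j * (w (j+1) - w j) tends to zero: either gam j is bounded, or it was
   reached by backtracking, and then the rejected trial step of parameter gam j / tau is short
   and the linearization error of phi over it is small by continuity of grad.
   Finally gam j * (w j - grad (w j) / gam j - w (j+1)) is a proximal normal to D at w (j+1),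
   and along K it converges to - grad wbar. *)

section \<open>Subproblems and proximal normals\<close>

lemma subproblem_sol_le:
  assumes "subproblem_sol phi grad D wj gam x" "y \<in> D"
  shows "grad wj \<bullet> (x - wj) + gam / 2 * (norm (x - wj))\<^sup>2
           \<le> grad wj \<bullet> (y - wj) + gam / 2 * (norm (y - wj))\<^sup>2"
  using assms unfolding subproblem_sol_def by fastforce

lemma subproblem_sol_in: "subproblem_sol phi grad D wj gam x \<Longrightarrow> x \<in> D"
  by (simp add: subproblem_sol_def)

lemma subproblem_sol_descent:
  assumes "subproblem_sol phi grad D wj gam x" "wj \<in> D"
  shows "grad wj \<bullet> (x - wj) + gam / 2 * (norm (x - wj))\<^sup>2 \<le> 0"
  using subproblem_sol_le[OF assms] by simp

lemma norm_gradient_step_sq_eq: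
  fixes w g y :: "'a::real_inner"
  assumes "gam \<noteq> 0"
  shows "(norm (w - (1 / gam) *\<^sub>R g - y))\<^sup>2
           = 2 / gam * (g \<bullet> (y - w) + gam / 2 * (norm (y - w))\<^sup>2) + (norm g)\<^sup>2 / gam\<^sup>2"
proof -
  define u where "u = w - y"
  have "w - (1 / gam) *\<^sub>R g - y = u - (1 / gam) *\<^sub>R g"
    by (simp add: u_def algebra_simps)
  then have "(norm (w - (1 / gam) *\<^sub>R g - y))\<^sup>2 = (u - (1 / gam) *\<^sub>R g) \<bullet> (u - (1 / gam) *\<^sub>R g)"
    by (metis power2_norm_eq_inner)
  also have "\<dots> = u \<bullet> u - 2 * (1 / gam) * (u \<bullet> g) + (1 / gam)\<^sup>2 * (g \<bullet> g)"
    by (simp add: inner_diff_left inner_diff_right inner_commute power2_eq_square algebra_simps)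
  also have "u \<bullet> u = (norm (y - w))\<^sup>2"
    by (simp add: u_def power2_norm_eq_inner inner_diff_left inner_diff_right inner_commute)
  also have "u \<bullet> g = - (g \<bullet> (y - w))"
    by (simp add: u_def inner_commute inner_diff_left inner_diff_right)
  also have "g \<bullet> g = (norm g)\<^sup>2"
    by (simp add: power2_norm_eq_inner)
  finally show ?thesis
    using assms by (simp add: field_simps power2_eq_square)
qed

text \<open>Completing the square turns the subproblem objective into an increasing affine function
  of the squared distance to the gradient step.\<close>
lemma subproblem_sol_in_proj_set:
  assumes sol: "subproblem_sol phi grad D wj gam x" and gam: "0 < gam"
  shows "x \<in> proj_set D (wj - (1 / gam) *\<^sub>R grad wj)"
proof -
  have "dist (wj - (1 / gam) *\<^sub>R grad wj) x \<le> dist (wj - (1 / gam) *\<^sub>R grad wj) y"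
    if "y \<in> D" for y
  proof -
    have "2 / gam * (grad wj \<bullet> (x - wj) + gam / 2 * (norm (x - wj))\<^sup>2)
            \<le> 2 / gam * (grad wj \<bullet> (y - wj) + gam / 2 * (norm (y - wj))\<^sup>2)"
      using subproblem_sol_le[OF sol that] gam by (intro mult_left_mono) auto
    then have "(norm (wj - (1 / gam) *\<^sub>R grad wj - x))\<^sup>2 \<le> (norm (wj - (1 / gam) *\<^sub>R grad wj - y))\<^sup>2"
      unfolding norm_gradient_step_sq_eq[OF less_imp_neq[OF gam, symmetric]] by linarith
    then show ?thesis
      unfolding dist_norm by (rule power2_le_imp_le) simp
  qed
  with subproblem_sol_in[OF sol] show ?thesis
    unfolding proj_set_def by blast
qed

lemma subproblem_sol_step_antimono:
  assumes sol1: "subproblem_sol phi grad D wj g1 x1" and sol2: "subproblem_sol phi grad D wj g2 x2"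
    and "g1 < g2"
  shows "norm (x2 - wj) \<le> norm (x1 - wj)"
proof -
  have "g2 * (norm (x2 - wj))\<^sup>2 - g1 * (norm (x2 - wj))\<^sup>2
      \<le> g2 * (norm (x1 - wj))\<^sup>2 - g1 * (norm (x1 - wj))\<^sup>2"
    using subproblem_sol_le[OF sol1 subproblem_sol_in[OF sol2]]
      subproblem_sol_le[OF sol2 subproblem_sol_in[OF sol1]]
    by linarith
  then have "(g2 - g1) * (norm (x2 - wj))\<^sup>2 \<le> (g2 - g1) * (norm (x1 - wj))\<^sup>2"
    by (simp only: left_diff_distrib)
  then have "(norm (x2 - wj))\<^sup>2 \<le> (norm (x1 - wj))\<^sup>2"
    using \<open>g1 < g2\<close> by simp
  then show ?thesis
    by (rule power2_le_imp_le) simp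
qed

lemma subproblem_sol_step_le:
  assumes sol: "subproblem_sol phi grad D wj gam x" and "wj \<in> D" "0 < gam"
  shows "gam * norm (x - wj) \<le> 2 * norm (grad wj)"
proof (cases "x = wj")
  case False
  have "gam / 2 * (norm (x - wj))\<^sup>2 \<le> - (grad wj \<bullet> (x - wj))"
    using subproblem_sol_descent[OF sol \<open>wj \<in> D\<close>] by linarith
  also have "\<dots> \<le> norm (grad wj) * norm (x - wj)"
    using Cauchy_Schwarz_ineq2[of "grad wj" "x - wj"] by linarith
  finally have "(gam / 2 * norm (x - wj)) * norm (x - wj) \<le> norm (grad wj) * norm (x - wj)"
    by (simp add: power2_eq_square mult.assoc)
  then show ?thesis
    using False by simp
qed simp

lemma armijo_failure_step_le:
  assumes sol: "subproblem_sol phi grad D wj g x" and "wj \<in> D"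
    and fail: "phi wj + sig * (grad wj \<bullet> (x - wj)) < phi x"
    and lin: "\<bar>phi x - phi wj - grad wj \<bullet> (x - wj)\<bar> \<le> norm (x - wj) * e"
    and "sig < 1"
  shows "(1 - sig) * g / 2 * norm (x - wj) \<le> e"
proof -
  define q where "q = - (grad wj \<bullet> (x - wj))"
  have "g / 2 * (norm (x - wj))\<^sup>2 \<le> q"
    using subproblem_sol_descent[OF sol \<open>wj \<in> D\<close>] by (simp add: q_def)
  then have "(1 - sig) * (g / 2 * (norm (x - wj))\<^sup>2) \<le> (1 - sig) * q"
    using \<open>sig < 1\<close> by (intro mult_left_mono) auto
  also have "\<dots> < norm (x - wj) * e"
    using fail lin by (simp add: q_def abs_le_iff algebra_simps)
  finally have "((1 - sig) * g / 2 * norm (x - wj)) * norm (x - wj) < e * norm (x - wj)"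
    by (simp add: power2_eq_square algebra_simps)
  then show ?thesis
    by (cases "x = wj") auto
qed

lemma linearization_error_le:
  fixes f :: "'a::real_inner \<Rightarrow> real"
  assumes deriv: "\<And>x. (f has_derivative (\<lambda>h. g x \<bullet> h)) (at x)"
    and near: "\<And>\<xi>. \<xi> \<in> cball a \<rho> \<Longrightarrow> norm (g \<xi> - g a) \<le> B"
    and "norm (b - a) \<le> \<rho>"
  shows "\<bar>f b - f a - g a \<bullet> (b - a)\<bar> \<le> norm (b - a) * B"
proof -
  have "norm (f b - f a - (\<lambda>h. g a \<bullet> h) (b - a)) \<le> norm (b - a) * B"
  proof (rule differentiable_bound_linearization[where S = "cball a \<rho>" and f' = "\<lambda>x h. g x \<bullet> h"])
    fix t :: real
    assume "t \<in> {0..1}"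
    then have "t * norm (b - a) \<le> \<rho>"
      using mult_left_le_one_le[OF norm_ge_zero, of t "b - a"] \<open>norm (b - a) \<le> \<rho>\<close> by simp
    with \<open>t \<in> {0..1}\<close> show "a + t *\<^sub>R (b - a) \<in> cball a \<rho>"
      by (simp add: dist_norm)
  next
    fix x
    show "(f has_derivative (\<lambda>h. g x \<bullet> h)) (at x within cball a \<rho>)"
      using deriv has_derivative_at_withinI by blast
  next
    fix x
    assume "x \<in> cball a \<rho>"
    have "onorm (\<lambda>h. (g x - g a) \<bullet> h) \<le> norm (g x - g a)"
      by (rule onorm_bound) (auto simp: Cauchy_Schwarz_ineq2)
    then show "onorm ((\<lambda>h. g x \<bullet> h) - (\<lambda>h. g a \<bullet> h)) \<le> B"
      using near[OF \<open>x \<in> cball a \<rho>\<close>] by (simp add: fun_diff_def inner_diff_left)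
  next
    have "0 \<le> \<rho>"
      using \<open>norm (b - a) \<le> \<rho>\<close> norm_ge_zero[of "b - a"] by linarith
    then show "a \<in> cball a \<rho>" by simp
  qed
  then show ?thesis by simp
qed

lemma proj_set_segment:
  assumes "p \<in> proj_set D z" "0 \<le> t" "t \<le> 1"
  shows "p \<in> proj_set D (p + t *\<^sub>R (z - p))"
proof -
  have "dist (p + t *\<^sub>R (z - p)) p \<le> dist (p + t *\<^sub>R (z - p)) d" if "d \<in> D" for d
  proof -
    have "z - (p + t *\<^sub>R (z - p)) = (1 - t) *\<^sub>R (z - p)" by (simp add: algebra_simps)
    then have "dist z (p + t *\<^sub>R (z - p)) = (1 - t) * dist z p"
      using \<open>t \<le> 1\<close> by (simp add: dist_norm)
    moreover have "dist (p + t *\<^sub>R (z - p)) p = t * dist z p"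
      using \<open>0 \<le> t\<close> by (simp add: dist_norm)
    moreover have "dist z p \<le> dist z d"
      using assms(1) that unfolding proj_set_def by blast
    ultimately show ?thesis
      using dist_triangle[of z d "p + t *\<^sub>R (z - p)"] by (simp add: left_diff_distrib)
  qed
  then show ?thesis
    using assms(1) unfolding proj_set_def by blast
qed

text \<open>The base points of the projections are moved towards the projected points, along the
  segments, by a vanishing fraction \<open>1 / (k + 1)\<close>.\<close>
lemma proximal_normals_tendsto_lim_normal_cone:
  fixes p z :: "nat \<Rightarrow> 'a::euclidean_space"
  assumes proj: "\<And>k. p k \<in> proj_set D (z k)" and p: "p \<longlonglongrightarrow> wbar"
    and c: "\<And>k. c0 \<le> c k" "0 < c0"
    and v: "(\<lambda>k. c k *\<^sub>R (z k - p k)) \<longlonglongrightarrow> v"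
  shows "v \<in> lim_normal_cone D wbar"
proof -
  define t where "t k = inverse (real (Suc k))" for k
  define ws where "ws k = p k + t k *\<^sub>R (z k - p k)" for k
  have t: "0 < t k" "t k \<le> 1" for k
    by (auto simp: t_def field_simps)
  have in_cone: "c k *\<^sub>R (z k - p k) \<in> ray_cone ((\<lambda>q. ws k - q) ` proj_set D (ws k))" for k
  proof -
    have "c k *\<^sub>R (z k - p k) = (c k / t k) *\<^sub>R (ws k - p k)"
      using t(1)[of k] by (simp add: ws_def)
    moreover have "p k \<in> proj_set D (ws k)"
      unfolding ws_def using proj_set_segment[OF proj less_imp_le[OF t(1)] t(2)] .
    moreover have "0 \<le> c k / t k"
      using c(1)[of k] c(2) t(1)[of k] by simp
    ultimately show ?thesis unfolding ray_cone_def by blast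
  qed
  have ws: "ws \<longlonglongrightarrow> wbar"
  proof -
    obtain B where B: "\<And>k. norm (c k *\<^sub>R (z k - p k)) \<le> B"
      using convergent_imp_Bseq[OF convergentI[OF v]] unfolding Bseq_def by blast
    have bound: "\<forall>k. norm (t k *\<^sub>R (z k - p k)) \<le> t k * (B / c0)"
    proof
      fix k
      have "c0 * norm (z k - p k) \<le> c k * norm (z k - p k)"
        using c(1)[of k] by (simp add: mult_right_mono)
      also have "\<dots> \<le> B" using B[of k] c(1)[of k] c(2) by simp
      finally have "norm (z k - p k) \<le> B / c0"
        using c(2) by (simp add: field_simps)
      then have "t k * norm (z k - p k) \<le> t k * (B / c0)"
        using t(1)[of k] by (intro mult_left_mono) auto
      then show "norm (t k *\<^sub>R (z k - p k)) \<le> t k * (B / c0)"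
        using t(1)[of k] by (simp add: abs_of_pos)
    qed
    have "(\<lambda>k. t k * (B / c0)) \<longlonglongrightarrow> 0"
      unfolding t_def by (intro tendsto_mult_left_zero LIMSEQ_inverse_real_of_nat)
    from tendsto_add[OF p Lim_null_comparison[OF always_eventually[OF bound] this]]
    show ?thesis by (simp add: ws_def[abs_def])
  qed
  show ?thesis
    unfolding lim_normal_cone_def mem_Collect_eq
    by (intro exI[of _ ws] exI[of _ "\<lambda>k. c k *\<^sub>R (z k - p k)"] conjI allI ws v in_cone)
qed

section \<open>Nonmonotone descent\<close>

definition window_max :: "(nat \<Rightarrow> 'b::linorder) \<Rightarrow> nat \<Rightarrow> nat \<Rightarrow> 'b" where
  "window_max f m j = Max ((\<lambda>r. f (j - r)) ` {0..min j m})"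

lemma window_max_ge: "f j \<le> window_max f m j"
  unfolding window_max_def by (rule Max_ge) (auto intro: image_eqI[of _ _ 0])

lemma window_max_0 [simp]: "window_max f m 0 = f 0"
  by (simp add: window_max_def)

lemma window_max_attained:
  obtains i where "j - m \<le> i" "i \<le> j" "f i = window_max f m j"
proof -
  have "window_max f m j \<in> (\<lambda>r. f (j - r)) ` {0..min j m}"
    unfolding window_max_def by (rule Max_in) auto
  then obtain r where "r \<le> min j m" "window_max f m j = f (j - r)" by auto
  then show ?thesis
    using that[of "j - r"] by auto
qed

lemma window_max_Suc_le:
  assumes "f (Suc j) \<le> window_max f m j"
  shows "window_max f m (Suc j) \<le> window_max f m j"
proof -
  have "f (Suc j - r) \<le> window_max f m j" if "r \<le> min (Suc j) m" for r
  proof (cases r)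
    case (Suc r')
    with that show ?thesis
      unfolding window_max_def by (intro Max_ge) (auto intro: image_eqI[of _ _ r'])
  qed (simp add: assms)
  then show ?thesis
    unfolding window_max_def[of f m "Suc j"] by (intro Max.boundedI) auto
qed

locale nonmonotone_descent =
  fixes f a :: "nat \<Rightarrow> real" and m :: nat
  assumes descent: "f (Suc j) \<le> window_max f m j - a j"
    and decrease_nonneg: "0 \<le> a j"
begin

lemma window_max_decseq: "decseq (window_max f m)"
proof (rule decseq_SucI, rule window_max_Suc_le)
  fix j
  show "f (Suc j) \<le> window_max f m j"
    using descent[of j] decrease_nonneg[of j] by linarith
qed

lemma le_initial: "f j \<le> f 0"
  using window_max_ge[of f j m] decseqD[OF window_max_decseq, of 0 j] by simp

context
  fixes L :: real
  assumes window_max_lim: "window_max f m \<longlonglongrightarrow> L"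
    and decrease_controls:
      "\<And>t. (\<lambda>j. a (t j)) \<longlonglongrightarrow> 0 \<Longrightarrow> (\<lambda>j. f (t j) - f (Suc (t j))) \<longlonglongrightarrow> 0"
begin

lemma tendsto_of_tendsto_next:
  assumes t: "filterlim t sequentially sequentially"
    and after: "(\<lambda>j. f (Suc (t j))) \<longlonglongrightarrow> L"
  shows "(\<lambda>j. a (t j)) \<longlonglongrightarrow> 0" "(\<lambda>j. f (t j)) \<longlonglongrightarrow> L"
proof -
  have "(\<lambda>j. window_max f m (t j) - f (Suc (t j))) \<longlonglongrightarrow> L - L"
    by (intro tendsto_diff filterlim_compose[OF window_max_lim t] after)
  then have upper: "(\<lambda>j. window_max f m (t j) - f (Suc (t j))) \<longlonglongrightarrow> 0"
    by simp
  have "\<forall>j. a (t j) \<le> window_max f m (t j) - f (Suc (t j))"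
    using descent by (simp add: algebra_simps)
  then show a: "(\<lambda>j. a (t j)) \<longlonglongrightarrow> 0"
    using decrease_nonneg
    by (intro tendsto_sandwich[OF always_eventually always_eventually tendsto_const upper]) simp_all
  from tendsto_add[OF decrease_controls[OF a] after]
  show "(\<lambda>j. f (t j)) \<longlonglongrightarrow> L" by simp
qed

text \<open>Where the window maximum is attained, the values converge; walking back through
  the window one step at a time, so do all values in the window.\<close>
lemma tendsto_window_lim: "f \<longlonglongrightarrow> L"
proof -
  have "\<forall>n. \<exists>i. n - m \<le> i \<and> i \<le> n \<and> f i = window_max f m n"
  proof
    fix n
    obtain i where "n - m \<le> i" "i \<le> n" "f i = window_max f m n"
      by (rule window_max_attained)
    then show "\<exists>i. n - m \<le> i \<and> i \<le> n \<and> f i = window_max f m n" by blast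
  qed
  then obtain l where l: "\<forall>n. n - m \<le> l n \<and> l n \<le> n \<and> f (l n) = window_max f m n"
    by (rule choice_iff[THEN iffD1, elim_format]) blast
  define N where "N = Suc m"
  define h where "h j = l (j + 2 * N)" for j
  have h: "j + N + 1 \<le> h j" "h j \<le> j + 2 * N" for j
    using l[rule_format, of "j + 2 * N"] by (auto simp: h_def N_def)
  have shifted: "(\<lambda>j. f (h j - r)) \<longlonglongrightarrow> L" if "r \<le> N" for r
    using that
  proof (induction r)
    case 0
    show ?case
      using LIMSEQ_ignore_initial_segment[OF window_max_lim, of "2 * N"] by (simp add: h_def l)
  next
    case (Suc r)
    have "j \<le> h j - Suc r" for j
      using h(1)[of j] Suc.prems by linarith
    then have "filterlim (\<lambda>j. h j - Suc r) sequentially sequentially"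
      by (intro filterlim_at_top_mono[OF filterlim_ident always_eventually]) auto
    moreover have "Suc (h j - Suc r) = h j - r" for j
      using h(1)[of j] Suc.prems by linarith
    ultimately show ?case
      using tendsto_of_tendsto_next(2)[of "\<lambda>j. h j - Suc r"] Suc by simp
  qed
  have "(\<lambda>j. \<Sum>r\<le>N. \<bar>f (h j - r) - L\<bar>) \<longlonglongrightarrow> (\<Sum>r\<le>N. \<bar>L - L\<bar>)"
    using shifted by (intro tendsto_sum tendsto_rabs tendsto_diff tendsto_const) auto
  then have window_err: "(\<lambda>j. \<Sum>r\<le>N. \<bar>f (h j - r) - L\<bar>) \<longlonglongrightarrow> 0"
    by simp
  have "\<forall>j. norm (f (j + N) - L) \<le> (\<Sum>r\<le>N. \<bar>f (h j - r) - L\<bar>)"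
  proof
    fix j
    have "\<bar>f (h j - (h j - (j + N))) - L\<bar> \<le> (\<Sum>r\<le>N. \<bar>f (h j - r) - L\<bar>)"
      using h[of j] by (intro member_le_sum) auto
    moreover have "h j - (h j - (j + N)) = j + N"
      using h(1)[of j] by linarith
    ultimately show "norm (f (j + N) - L) \<le> (\<Sum>r\<le>N. \<bar>f (h j - r) - L\<bar>)"
      by simp
  qed
  from Lim_null_comparison[OF always_eventually[OF this] window_err]
  have "(\<lambda>j. f (j + N) - L + L) \<longlonglongrightarrow> 0 + L"
    by (intro tendsto_add tendsto_const)
  then show ?thesis
    using LIMSEQ_offset[of f N] by simp
qed

end

lemma decrease_tendsto_zero:
  assumes bdd: "\<And>j. c \<le> f j"
    and decrease_controls:
      "\<And>t. (\<lambda>j. a (t j)) \<longlonglongrightarrow> 0 \<Longrightarrow> (\<lambda>j. f (t j) - f (Suc (t j))) \<longlonglongrightarrow> 0"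
  shows "a \<longlonglongrightarrow> 0"
proof -
  have "\<forall>j. c \<le> window_max f m j"
    using bdd window_max_ge order_trans by blast
  then obtain L where L: "window_max f m \<longlonglongrightarrow> L"
    using decseq_convergent[OF window_max_decseq] by blast
  have "(\<lambda>j. f (Suc j)) \<longlonglongrightarrow> L"
    by (rule LIMSEQ_Suc[OF tendsto_window_lim[OF L decrease_controls]])
  then show ?thesis
    using tendsto_of_tendsto_next(1)[OF L decrease_controls filterlim_ident] by simp
qed

end

section \<open>Convergence of the spectral gradient method\<close>

lemma tendsto_zero_if_scaled_norm_sq:
  fixes v :: "nat \<Rightarrow> 'a::real_normed_vector"
  assumes "0 < c" and "(\<lambda>j. c * (norm (v j))\<^sup>2) \<longlonglongrightarrow> 0"
  shows "v \<longlonglongrightarrow> 0"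
proof -
  have "(\<lambda>j. 1 / c * (c * (norm (v j))\<^sup>2)) \<longlonglongrightarrow> 1 / c * 0"
    by (intro tendsto_mult tendsto_const assms(2))
  then have "(\<lambda>j. sqrt ((norm (v j))\<^sup>2)) \<longlonglongrightarrow> sqrt 0"
    using assms(1) by (intro tendsto_real_sqrt) simp
  then show ?thesis
    by (simp add: tendsto_norm_zero_iff)
qed

lemma isCont_eventually_close:
  fixes g :: "'a::metric_space \<Rightarrow> 'b::metric_space"
  assumes "isCont g xbar" and "x \<longlonglongrightarrow> xbar" and "0 < e"
  obtains \<rho> where "0 < \<rho>" "\<forall>\<^sub>F k in sequentially. \<forall>\<xi>\<in>cball (x k) \<rho>. dist (g \<xi>) (g (x k)) < e"
proof -
  obtain \<delta> where "0 < \<delta>" and \<delta>: "\<And>\<xi>. dist \<xi> xbar < \<delta> \<Longrightarrow> dist (g \<xi>) (g xbar) < e / 2"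
    using assms(1,3) unfolding continuous_at_eps_delta by (meson half_gt_zero)
  have "\<forall>\<^sub>F k in sequentially. dist (x k) xbar < \<delta> / 2"
    using tendstoD[OF assms(2) half_gt_zero[OF \<open>0 < \<delta>\<close>]] .
  then have "\<forall>\<^sub>F k in sequentially. \<forall>\<xi>\<in>cball (x k) (\<delta> / 2). dist (g \<xi>) (g (x k)) < e"
  proof eventually_elim
    case (elim k)
    show ?case
    proof
      fix \<xi>
      assume "\<xi> \<in> cball (x k) (\<delta> / 2)"
      then have "dist \<xi> (x k) \<le> \<delta> / 2"
        by (metis mem_cball dist_commute)
      then have "dist \<xi> xbar < \<delta>"
        using elim dist_triangle[of \<xi> xbar "x k"] by linarith
      moreover have "dist (x k) xbar < \<delta>"
        using elim zero_le_dist[of "x k" xbar] by linarith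
      ultimately show "dist (g \<xi>) (g (x k)) < e"
        by (rule dist_triangle_half_l[OF \<delta> \<delta>])
    qed
  qed
  then show ?thesis
    using \<open>0 < \<delta>\<close> by (intro that[of "\<delta> / 2"]) auto
qed

locale spg_iteration =
  fixes phi :: "'a::euclidean_space \<Rightarrow> real" and grad :: "'a \<Rightarrow> 'a" and D :: "'a set"
    and tau sig gmin gmax :: real and m :: nat
    and w :: "nat \<Rightarrow> 'a" and gam0 :: "nat \<Rightarrow> real" and wi :: "nat \<Rightarrow> nat \<Rightarrow> 'a"
    and ii :: "nat \<Rightarrow> nat" and gam :: "nat \<Rightarrow> real"
  assumes run: "spg_run phi grad D tau sig gmin gmax m w gam0 wi ii gam"
    and deriv: "\<And>x. (phi has_derivative (\<lambda>h. grad x \<bullet> h)) (at x)"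
    and grad_cont: "continuous_on UNIV grad"
    and tau: "1 < tau" and sig: "0 < sig" "sig < 1" and gmin_pos: "0 < gmin"
begin

lemma
  shows start_in_D: "w 0 \<in> D"
    and gam0_ge: "gmin \<le> gam0 j" and gam0_le: "gam0 j \<le> gmax"
    and inner_ge_1: "1 \<le> ii j"
    and trial_solves: "1 \<le> i \<Longrightarrow> i \<le> ii j \<Longrightarrow>
      subproblem_sol phi grad D (w j) (tau ^ (i - 1) * gam0 j) (wi j i)"
    and trial_rejected: "1 \<le> i \<Longrightarrow> i < ii j \<Longrightarrow> \<not> accept phi grad m sig w j (wi j i)"
    and step_accepted: "accept phi grad m sig w j (wi j (ii j))"
    and gam_eq: "gam j = tau ^ (ii j - 1) * gam0 j"
    and next_iterate: "w (Suc j) = wi j (ii j)"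
  using run unfolding spg_run_def by blast+

lemma gam_ge_gmin: "gmin \<le> gam j"
proof -
  have "1 * gmin \<le> tau ^ (ii j - 1) * gam0 j"
    using tau gmin_pos gam0_ge[of j] by (intro mult_mono one_le_power) auto
  then show ?thesis
    by (simp add: gam_eq)
qed

lemma gam_pos: "0 < gam j"
  using gam_ge_gmin[of j] gmin_pos by linarith

lemma iterate_solves: "subproblem_sol phi grad D (w j) (gam j) (w (Suc j))"
  using trial_solves[OF inner_ge_1 order_refl] by (simp add: gam_eq next_iterate)

lemma iterate_in_D: "w j \<in> D"
  using start_in_D subproblem_sol_in[OF iterate_solves] by (cases j) auto

lemma sufficient_decrease:
  "phi (w (Suc j)) \<le> window_max (\<lambda>i. phi (w i)) m j - sig * gmin / 2 * (norm (w (Suc j) - w j))\<^sup>2"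
proof -
  have accepted:
    "phi (w (Suc j)) \<le> window_max (\<lambda>i. phi (w i)) m j + sig * (grad (w j) \<bullet> (w (Suc j) - w j))"
    using step_accepted[of j] unfolding accept_def window_max_def by (simp add: next_iterate)
  have "grad (w j) \<bullet> (w (Suc j) - w j) \<le> - (gmin / 2 * (norm (w (Suc j) - w j))\<^sup>2)"
    using subproblem_sol_descent[OF iterate_solves[of j] iterate_in_D[of j]]
      mult_right_mono[OF gam_ge_gmin[of j], of "(norm (w (Suc j) - w j))\<^sup>2"]
    by simp
  from mult_left_mono[OF this, of sig] show ?thesis
    using accepted sig by simp
qed

lemma backtracked:
  assumes "gmax < gam j"
  obtains x where "subproblem_sol phi grad D (w j) (gam j / tau) x"
    and "window_max (\<lambda>i. phi (w i)) m j + sig * (grad (w j) \<bullet> (x - w j)) < phi x"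
proof -
  have "ii j \<noteq> 1"
    using assms gam0_le[of j] by (auto simp: gam_eq)
  define i where "i = ii j - 1"
  have i: "1 \<le> i" "i < ii j"
    using inner_ge_1[of j] \<open>ii j \<noteq> 1\<close> by (auto simp: i_def)
  have "ii j - 1 = Suc (i - 1)"
    using i by (simp add: i_def)
  then have "gam j / tau = tau ^ (i - 1) * gam0 j"
    using tau by (simp add: gam_eq)
  then show ?thesis
    using that[of "wi j i"] trial_solves[of i] trial_rejected[OF i] i
    unfolding accept_def window_max_def by (simp add: not_le)
qed

sublocale nonmonotone_descent "\<lambda>i. phi (w i)" "\<lambda>j. sig * gmin / 2 * (norm (w (Suc j) - w j))\<^sup>2" m
  using sufficient_decrease sig gmin_pos by unfold_locales auto

lemma iterate_in_level_set: "w j \<in> {x \<in> D. phi x \<le> phi (w 0)}"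
  using iterate_in_D le_initial by simp

lemma steps_tendsto_zero:
  assumes bdd: "\<exists>c. \<forall>x\<in>{x \<in> D. phi x \<le> phi (w 0)}. c \<le> phi x"
    and unif: "uniformly_continuous_on {x \<in> D. phi x \<le> phi (w 0)} phi"
  shows "(\<lambda>j. w (Suc j) - w j) \<longlonglongrightarrow> 0"
proof -
  have "0 < sig * gmin / 2"
    using sig gmin_pos by simp
  note vanishing = tendsto_zero_if_scaled_norm_sq[OF this]
  obtain c where "\<And>j. c \<le> phi (w j)"
    using bdd iterate_in_level_set by blast
  then have "(\<lambda>j. sig * gmin / 2 * (norm (w (Suc j) - w j))\<^sup>2) \<longlonglongrightarrow> 0"
  proof (rule decrease_tendsto_zero)
    fix t :: "nat \<Rightarrow> nat"
    assume "(\<lambda>j. sig * gmin / 2 * (norm (w (Suc (t j)) - w (t j)))\<^sup>2) \<longlonglongrightarrow> 0"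
    then have "(\<lambda>j. w (Suc (t j)) - w (t j)) \<longlonglongrightarrow> 0"
      by (rule vanishing)
    from tendsto_minus[OF this]
    have "(\<lambda>j. dist (w (t j)) (w (Suc (t j)))) \<longlonglongrightarrow> 0"
      by (simp add: dist_norm tendsto_norm_zero_iff)
    then have "(\<lambda>j. dist (phi (w (t j))) (phi (w (Suc (t j))))) \<longlonglongrightarrow> 0"
      using unif[unfolded uniformly_continuous_on_sequentially, rule_format,
          of "\<lambda>j. w (t j)" "\<lambda>j. w (Suc (t j))"] iterate_in_level_set
      by blast
    then show "(\<lambda>j. phi (w (t j)) - phi (w (Suc (t j)))) \<longlonglongrightarrow> 0"
      by (simp add: dist_real_def tendsto_rabs_zero_iff)
  qed
  then show ?thesis
    by (rule vanishing)
qed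

text \<open>A parameter above \<open>gmax\<close> was reached by backtracking, so the rejected trial step of
  parameter \<open>gam j / tau\<close> bounds the accepted one, and its rejection bounds it by the
  linearization error.\<close>
lemma backtracked_step_le:
  assumes "gmax < gam j" and G: "norm (grad (w j)) \<le> G" and "0 < \<rho>"
    and near: "\<And>\<xi>. \<xi> \<in> cball (w j) \<rho> \<Longrightarrow> norm (grad \<xi> - grad (w j)) \<le> e"
    and large: "2 * G \<le> gam j / tau * \<rho>"
  shows "(1 - sig) * gam j * norm (w (Suc j) - w j) \<le> 2 * tau * e"
proof -
  obtain x where sol: "subproblem_sol phi grad D (w j) (gam j / tau) x"
    and fail: "window_max (\<lambda>i. phi (w i)) m j + sig * (grad (w j) \<bullet> (x - w j)) < phi x"
    using backtracked[OF \<open>gmax < gam j\<close>] by blast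
  have "0 < gam j / tau"
    using gam_pos tau by simp
  have "gam j / tau * norm (x - w j) \<le> gam j / tau * \<rho>"
    using subproblem_sol_step_le[OF sol iterate_in_D \<open>0 < gam j / tau\<close>] G large by linarith
  then have "norm (x - w j) \<le> \<rho>"
    using \<open>0 < gam j / tau\<close> by (rule mult_left_le_imp_le)
  from linearization_error_le[OF deriv near this]
  have trial_short: "(1 - sig) * (gam j / tau) / 2 * norm (x - w j) \<le> e"
    using window_max_ge[of "\<lambda>i. phi (w i)" j m] fail sig
    by (intro armijo_failure_step_le[OF sol iterate_in_D]) auto
  have "gam j / tau < gam j"
    using gam_pos[of j] tau by (simp add: divide_less_eq)
  then have "norm (w (Suc j) - w j) \<le> norm (x - w j)"
    by (rule subproblem_sol_step_antimono[OF sol iterate_solves])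
  then have "(1 - sig) * gam j * norm (w (Suc j) - w j) \<le> (1 - sig) * gam j * norm (x - w j)"
    using gam_pos[of j] sig by (intro mult_left_mono) auto
  also have "\<dots> = 2 * tau * ((1 - sig) * (gam j / tau) / 2 * norm (x - w j))"
    using tau by (simp add: field_simps)
  also have "\<dots> \<le> 2 * tau * e"
    using trial_short tau by (intro mult_left_mono) auto
  finally show ?thesis .
qed

lemma scaled_step_lt:
  assumes G: "norm (grad (w j)) \<le> G" and "0 < G" "0 < \<rho>" "0 < \<epsilon>"
    and near: "\<forall>\<xi>\<in>cball (w j) \<rho>. dist (grad \<xi>) (grad (w j)) < (1 - sig) * \<epsilon> / (4 * tau)"
    and small: "norm (w (Suc j) - w j) < \<epsilon> / (tau * max gmax (2 * G / \<rho>))"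
  shows "gam j * norm (w (Suc j) - w j) < \<epsilon>"
proof -
  define M where "M = max gmax (2 * G / \<rho>)"
  have "0 < tau * M"
    using \<open>0 < G\<close> \<open>0 < \<rho>\<close> tau by (simp add: M_def less_max_iff_disj)
  show ?thesis
  proof (cases "gam j \<le> tau * M")
    case True
    have "gam j * norm (w (Suc j) - w j) \<le> tau * M * norm (w (Suc j) - w j)"
      using True by (intro mult_right_mono) auto
    also have "\<dots> < \<epsilon>"
      using small \<open>0 < tau * M\<close> by (simp add: M_def field_simps)
    finally show ?thesis .
  next
    case False
    then have "M < gam j / tau"
      using tau by (simp add: field_simps)
    moreover have "gam j / tau < gam j"
      using gam_pos[of j] tau by (simp add: divide_less_eq)
    ultimately have "gmax < gam j"
      by (simp add: M_def)
    have "2 * G / \<rho> < gam j / tau"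
      using \<open>M < gam j / tau\<close> by (simp add: M_def)
    then have "2 * G \<le> gam j / tau * \<rho>"
      using \<open>0 < \<rho>\<close> by (simp add: divide_less_eq)
    with \<open>gmax < gam j\<close>
    have "(1 - sig) * gam j * norm (w (Suc j) - w j) \<le> 2 * tau * ((1 - sig) * \<epsilon> / (4 * tau))"
      using G near \<open>0 < \<rho>\<close> by (intro backtracked_step_le) (auto simp: dist_norm less_imp_le)
    also have "\<dots> = (1 - sig) * (\<epsilon> / 2)"
      using tau by (simp add: field_simps)
    finally have "gam j * norm (w (Suc j) - w j) \<le> \<epsilon> / 2"
      using sig by (simp add: mult.assoc)
    then show ?thesis
      using \<open>0 < \<epsilon>\<close> by linarith
  qed
qed

lemma isCont_grad: "isCont grad x"
  using grad_cont by (simp add: continuous_on_eq_continuous_at)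

lemma scaled_steps_tendsto_zero:
  assumes wK: "(\<lambda>k. w (K k)) \<longlonglongrightarrow> wbar" and dK: "(\<lambda>k. w (Suc (K k)) - w (K k)) \<longlonglongrightarrow> 0"
  shows "(\<lambda>k. gam (K k) *\<^sub>R (w (Suc (K k)) - w (K k))) \<longlonglongrightarrow> 0"
proof (rule tendstoI)
  fix \<epsilon> :: real
  assume "0 < \<epsilon>"
  obtain G where "0 < G" and G: "\<And>k. norm (grad (w (K k))) \<le> G"
    using convergent_imp_Bseq[OF convergentI[OF isCont_tendsto_compose[OF isCont_grad wK]]]
    unfolding Bseq_def by blast
  have "0 < (1 - sig) * \<epsilon> / (4 * tau)"
    using \<open>0 < \<epsilon>\<close> sig tau by simp
  then obtain \<rho> where "0 < \<rho>" and near: "\<forall>\<^sub>F k in sequentially.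
      \<forall>\<xi>\<in>cball (w (K k)) \<rho>. dist (grad \<xi>) (grad (w (K k))) < (1 - sig) * \<epsilon> / (4 * tau)"
    using isCont_eventually_close[OF isCont_grad wK] by blast
  have "0 < \<epsilon> / (tau * max gmax (2 * G / \<rho>))"
    using \<open>0 < \<epsilon>\<close> \<open>0 < G\<close> \<open>0 < \<rho>\<close> tau by (simp add: less_max_iff_disj)
  from tendstoD[OF dK this] near
  show "\<forall>\<^sub>F k in sequentially. dist (gam (K k) *\<^sub>R (w (Suc (K k)) - w (K k))) 0 < \<epsilon>"
  proof eventually_elim
    case (elim k)
    with scaled_step_lt[OF G \<open>0 < G\<close> \<open>0 < \<rho>\<close> \<open>0 < \<epsilon>\<close>] show ?case
      using gam_pos[of "K k"] by simp
  qed
qed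

lemma neg_grad_in_lim_normal_cone:
  assumes wK: "(\<lambda>k. w (K k)) \<longlonglongrightarrow> wbar" and dK: "(\<lambda>k. w (Suc (K k)) - w (K k)) \<longlonglongrightarrow> 0"
    and scaled: "(\<lambda>k. gam (K k) *\<^sub>R (w (Suc (K k)) - w (K k))) \<longlonglongrightarrow> 0"
  shows "- grad wbar \<in> lim_normal_cone D wbar"
proof (rule proximal_normals_tendsto_lim_normal_cone)
  show "w (Suc (K k)) \<in> proj_set D (w (K k) - (1 / gam (K k)) *\<^sub>R grad (w (K k)))" for k
    using subproblem_sol_in_proj_set[OF iterate_solves gam_pos] .
  show "(\<lambda>k. w (Suc (K k))) \<longlonglongrightarrow> wbar"
    using tendsto_add[OF wK dK] by simp
  show "gmin \<le> gam (K k)" for k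
    by (rule gam_ge_gmin)
  show "0 < gmin"
    by (rule gmin_pos)
  have "gam (K k) *\<^sub>R (w (K k) - (1 / gam (K k)) *\<^sub>R grad (w (K k)) - w (Suc (K k)))
      = - (gam (K k) *\<^sub>R (w (Suc (K k)) - w (K k))) - grad (w (K k))" for k
    using gam_pos[of "K k"] by (simp add: algebra_simps)
  with tendsto_diff[OF tendsto_minus[OF scaled] isCont_tendsto_compose[OF isCont_grad wK]]
  show "(\<lambda>k. gam (K k) *\<^sub>R (w (K k) - (1 / gam (K k)) *\<^sub>R grad (w (K k)) - w (Suc (K k))))
      \<longlonglongrightarrow> - grad wbar"
    by simp
qed

end

theorem mainTheorem5:
  fixes phi :: "'a::euclidean_space \<Rightarrow> real" and grad :: "'a \<Rightarrow> 'a"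
    and D :: "'a set" and tau sig gmin gmax :: real and m :: nat
    and w :: "nat \<Rightarrow> 'a" and gam0 :: "nat \<Rightarrow> real" and wi :: "nat \<Rightarrow> nat \<Rightarrow> 'a"
    and ii :: "nat \<Rightarrow> nat" and gam :: "nat \<Rightarrow> real"
    and K :: "nat \<Rightarrow> nat" and wbar :: 'a
  assumes deriv: "\<And>x. (phi has_derivative (\<lambda>h. grad x \<bullet> h)) (at x)"
    and grad_cont: "continuous_on UNIV grad"
    and D_ne: "D \<noteq> {}" and D_closed: "closed D"
    and tau: "tau > 1" and sig: "0 < sig" "sig < 1"
    and gam_bounds: "0 < gmin" "gmin \<le> gmax"
    and run: "spg_run phi grad D tau sig gmin gmax m w gam0 wi ii gam"
    and bdd: "\<exists>c. \<forall>x\<in>{x\<in>D. phi x \<le> phi (w 0)}. c \<le> phi x"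
    and unif: "uniformly_continuous_on {x\<in>D. phi x \<le> phi (w 0)} phi"
    and K: "strict_mono K" and conv: "(w \<circ> K) \<longlonglongrightarrow> wbar"
  shows "(\<exists>v\<in>lim_normal_cone D wbar. grad wbar + v = 0) \<and>
         ((\<lambda>k. gam (K k) *\<^sub>R (w (Suc (K k)) - w (K k))) \<longlonglongrightarrow> 0)"
proof -
  interpret spg_iteration phi grad D tau sig gmin gmax m w gam0 wi ii gam
    using run deriv grad_cont tau sig gam_bounds(1) by unfold_locales
  have wK: "(\<lambda>k. w (K k)) \<longlonglongrightarrow> wbar"
    using conv by (simp add: comp_def)
  have dK: "(\<lambda>k. w (Suc (K k)) - w (K k)) \<longlonglongrightarrow> 0"
    using LIMSEQ_subseq_LIMSEQ[OF steps_tendsto_zero[OF bdd unif] K] by (simp add: comp_def)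
  have scaled: "(\<lambda>k. gam (K k) *\<^sub>R (w (Suc (K k)) - w (K k))) \<longlonglongrightarrow> 0"
    by (rule scaled_steps_tendsto_zero[OF wK dK])
  have "grad wbar + - grad wbar = 0"
    by simp
  with neg_grad_in_lim_normal_cone[OF wK dK scaled] scaled show ?thesis
    by blast
qed

end
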